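(* Let $G$ be a Polish group, $X$ a Polish space with a continuous $G$-action, $F\subseteq E^X_G$ a Borel equivalence relation on $X$, and $C\subseteq X$ a set such that for every $x\in C$ there is an open neighbourhood $V\subseteq G$ of $1_G$ with $V\cdot x\cap C\subseteq[x]_F$, and such that $G(x,C)$ is comeager in $G$ for every $x\in X$. Then for all $x,y\in C$: $$(x,y)\in E^X_G\iff\{(a,b)\in G\times G:(a\cdot x,b\cdot y)\in F\}\text{ is non-meager in }G\times G.$$
   Context: $E^X_G=\{(x,y):\exists g\in G\ g\cdot x=y\}$; $[x]_F$ is the $F$-class of $x$; $G(x,A)=\{g\in G:g\cdot x\in A\}$. *)

theory Defs
  imports "HOL-Analysis.Analysis"
begin

definition nowhere_dense :: "'a::topological_space set \<Rightarrow> bool" where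
  "nowhere_dense A \<longleftrightarrow> interior (closure A) = {}"

definition meager :: "'a::topological_space set \<Rightarrow> bool" where
  "meager A \<longleftrightarrow> (\<exists>N :: nat \<Rightarrow> 'a set. (\<forall>n. nowhere_dense (N n)) \<and> A \<subseteq> (\<Union>n. N n))"

definition comeager :: "'a::topological_space set \<Rightarrow> bool" where
  "comeager A \<longleftrightarrow> meager (- A)"

text \<open>A continuous (left) action of the topological group 'g (written additively,
  not necessarily commutative) on the space 'x.\<close>
definition continuous_action :: "('g::topological_group_add \<Rightarrow> 'x::topological_space \<Rightarrow> 'x) \<Rightarrow> bool" where
  "continuous_action act \<longleftrightarrow>
     (\<forall>x. act 0 x = x) \<and> (\<forall>g h x. act (g + h) x = act g (act h x)) \<and>
     continuous_on UNIV (\<lambda>p. act (fst p) (snd p))"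

definition orbit_rel :: "('g \<Rightarrow> 'x \<Rightarrow> 'x) \<Rightarrow> ('x \<times> 'x) set" where
  "orbit_rel act = {(x, y). \<exists>g. act g x = y}"

definition return_set :: "('g \<Rightarrow> 'x \<Rightarrow> 'x) \<Rightarrow> 'x \<Rightarrow> 'x set \<Rightarrow> 'g set" where
  "return_set act x A = {g. act g x \<in> A}"

end

theory Submission imports Defs begin

text \<open>If \<open>x\<close> and \<open>y = h\<cdot>x\<close> lie in \<open>C\<close>, pick a neighbourhood \<open>V\<close> of \<open>0\<close> with
  \<open>V\<cdot>x \<inter> C \<subseteq> [x]\<^sub>F\<close>. For \<open>(a, b)\<close> in the nonempty open set \<open>V \<times> (V - h)\<close> with
  \<open>a\<cdot>x, b\<cdot>y \<in> C\<close>, both \<open>a\<cdot>x\<close> and \<open>b\<cdot>y = (b + h)\<cdot>x\<close> are \<open>F\<close>-equivalent to \<open>x\<close>.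
  Since \<open>G(x,C) \<times> G(y,C)\<close> is comeager and nonempty open subsets of the Polish group
  \<open>G \<times> G\<close> are non-meager (Baire), the set of such pairs is non-meager.
  Conversely, a single pair \<open>(a\<cdot>x, b\<cdot>y) \<in> F \<subseteq> E\<^sup>X\<^sub>G\<close> already puts \<open>x\<close> and \<open>y\<close> in
  the same orbit.\<close>

lemma meagerI: "(\<And>n::nat. nowhere_dense (N n)) \<Longrightarrow> A \<subseteq> (\<Union>n. N n) \<Longrightarrow> meager A"
  unfolding meager_def by auto

lemma meager_empty: "meager {}"
  by (rule meagerI[of "\<lambda>_. {}"]) (simp_all add: nowhere_dense_def)

lemma meager_subset: "meager B \<Longrightarrow> A \<subseteq> B \<Longrightarrow> meager A"
  unfolding meager_def by (meson order_trans)

lemma meager_Un: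
  assumes "meager A" "meager B"
  shows "meager (A \<union> B)"
proof -
  obtain N :: "nat \<Rightarrow> _" where N: "\<And>n. nowhere_dense (N n)" "A \<subseteq> (\<Union>n. N n)"
    using assms(1) unfolding meager_def by auto
  obtain M :: "nat \<Rightarrow> _" where M: "\<And>n. nowhere_dense (M n)" "B \<subseteq> (\<Union>n. M n)"
    using assms(2) unfolding meager_def by auto
  define K where "K n = (if even n then N (n div 2) else M (n div 2))" for n
  have "nowhere_dense (K n)" for n
    using N(1) M(1) by (simp add: K_def)
  moreover have "K (2 * n) = N n" "K (2 * n + 1) = M n" for n
    by (simp_all add: K_def)
  then have "N n \<subseteq> (\<Union>k. K k)" "M n \<subseteq> (\<Union>k. K k)" for n
    by (metis UNIV_I UN_upper)+
  then have "A \<union> B \<subseteq> (\<Union>n. K n)"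
    using N(2) M(2) by (meson UN_least Un_least order_trans)
  ultimately show ?thesis
    by (rule meagerI)
qed

lemma nowhere_dense_Times_UNIV: "nowhere_dense A \<Longrightarrow> nowhere_dense (A \<times> UNIV)"
  and nowhere_dense_UNIV_Times: "nowhere_dense A \<Longrightarrow> nowhere_dense (UNIV \<times> A)"
  by (simp_all add: nowhere_dense_def closure_Times interior_Times)

lemma meager_Times_UNIV:
  assumes "meager A"
  shows "meager (A \<times> UNIV)"
proof -
  obtain N :: "nat \<Rightarrow> _" where N: "\<And>n. nowhere_dense (N n)" "A \<subseteq> (\<Union>n. N n)"
    using assms unfolding meager_def by auto
  have "A \<times> UNIV \<subseteq> (\<Union>n. N n \<times> UNIV)"
    using N(2) by blast
  then show ?thesis
    by (rule meagerI[OF nowhere_dense_Times_UNIV[OF N(1)]])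
qed

lemma meager_UNIV_Times:
  assumes "meager A"
  shows "meager (UNIV \<times> A)"
proof -
  obtain N :: "nat \<Rightarrow> _" where N: "\<And>n. nowhere_dense (N n)" "A \<subseteq> (\<Union>n. N n)"
    using assms unfolding meager_def by auto
  have "UNIV \<times> A \<subseteq> (\<Union>n. UNIV \<times> N n)"
    using N(2) by blast
  then show ?thesis
    by (rule meagerI[OF nowhere_dense_UNIV_Times[OF N(1)]])
qed

lemma comeager_Times:
  assumes "comeager A" "comeager B"
  shows "comeager (A \<times> B)"
proof -
  have "- (A \<times> B) = (- A) \<times> UNIV \<union> UNIV \<times> (- B)"
    by auto
  moreover have "meager ((- A) \<times> UNIV \<union> UNIV \<times> (- B))"
    using assms unfolding comeager_def by (intro meager_Un meager_Times_UNIV meager_UNIV_Times)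
  ultimately show ?thesis
    unfolding comeager_def by simp
qed

lemma open_nonempty_not_meager:
  fixes U :: "'a::complete_space set"
  assumes "open U" "U \<noteq> {}"
  shows "\<not> meager U"
proof
  assume "meager U"
  then obtain N :: "nat \<Rightarrow> 'a set" where N: "\<And>n. nowhere_dense (N n)" "U \<subseteq> (\<Union>n. N n)"
    unfolding meager_def by auto
  have "euclidean interior_of \<Union>(range (\<lambda>n. closure (N n))) = {}"
  proof (rule Baire_category_alt)
    show "completely_metrizable_space (euclidean :: 'a topology) \<or>
        locally_compact_space (euclidean :: 'a topology) \<and> regular_space euclidean"
      using completely_metrizable_space_euclidean by blast
    show "countable (range (\<lambda>n. closure (N n)))"
      by simp
    show "closedin euclidean T \<and> euclidean interior_of T = {}"
      if "T \<in> range (\<lambda>n. closure (N n))" for T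
      using that N(1) by (auto simp: nowhere_dense_def)
  qed
  moreover have "U \<subseteq> interior (\<Union>n. closure (N n))"
    using N(2) closure_subset by (intro interior_maximal[OF _ \<open>open U\<close>]) blast
  ultimately show False
    using \<open>U \<noteq> {}\<close> by simp
qed

lemma not_meager_if_open_inter_comeager_subset:
  fixes U :: "'a::complete_space set"
  assumes "open U" "U \<noteq> {}" "comeager A" "U \<inter> A \<subseteq> S"
  shows "\<not> meager S"
proof
  assume "meager S"
  with \<open>comeager A\<close> have "meager (S \<union> - A)"
    by (simp add: comeager_def meager_Un)
  moreover have "U \<subseteq> S \<union> - A"
    using \<open>U \<inter> A \<subseteq> S\<close> by blast
  ultimately show False
    using open_nonempty_not_meager[OF \<open>open U\<close> \<open>U \<noteq> {}\<close>] meager_subset by blast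
qed

lemma continuous_actionD:
  assumes "continuous_action act"
  shows act_zero: "act 0 x = x" and act_add: "act (g + h) x = act g (act h x)"
  using assms by (simp_all add: continuous_action_def)

lemma orbit_rel_if_translates_related:
  assumes "continuous_action act" "F \<subseteq> orbit_rel act" "(act a x, act b y) \<in> F"
  shows "(x, y) \<in> orbit_rel act"
proof -
  obtain g where g: "act g (act a x) = act b y"
    using assms(2,3) unfolding orbit_rel_def by auto
  have "act (- b + (g + a)) x = act (- b + b) y"
    using g by (simp only: act_add[OF assms(1)])
  then have "act (- b + (g + a)) x = y"
    by (simp add: act_zero[OF assms(1)])
  then show ?thesis
    unfolding orbit_rel_def by blast
qed

lemma translates_related_near_zero:
  assumes act: "continuous_action act" and F: "equiv UNIV F"
    and V: "(\<lambda>g. act g x) ` V \<inter> C \<subseteq> F `` {x}"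
    and h: "act h x = y"
  shows "(V \<times> {b. b + h \<in> V}) \<inter> (return_set act x C \<times> return_set act y C)
           \<subseteq> {p. (act (fst p) x, act (snd p) y) \<in> F}"
proof clarify
  fix a b
  assume "a \<in> V" "b + h \<in> V" "a \<in> return_set act x C" "b \<in> return_set act y C"
  moreover have "act b y = act (b + h) x"
    using h by (simp add: act_add[OF act])
  ultimately have "(x, act a x) \<in> F" "(x, act b y) \<in> F"
    using V by (auto simp: return_set_def)
  moreover have "sym F" "trans F"
    using F by (simp_all add: equiv_def)
  ultimately have "(act a x, act b y) \<in> F"
    by (blast dest: symD transD)
  then show "(act (fst (a, b)) x, act (snd (a, b)) y) \<in> F"
    by simp
qed

theorem mainTheorem10:
  fixes act :: "'g::{polish_space, topological_group_add} \<Rightarrow> 'x::polish_space \<Rightarrow> 'x"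
    and F :: "('x \<times> 'x) set" and C :: "'x set"
  assumes "continuous_action act"
    and "equiv UNIV F"
    and "F \<in> sets borel"
    and "F \<subseteq> orbit_rel act"
    and "\<forall>x\<in>C. \<exists>V. open V \<and> 0 \<in> V \<and> (\<lambda>g. act g x) ` V \<inter> C \<subseteq> F `` {x}"
    and "\<forall>x. comeager (return_set act x C)"
    and "x \<in> C" and "y \<in> C"
  shows "(x, y) \<in> orbit_rel act \<longleftrightarrow>
         \<not> meager {p :: 'g \<times> 'g. (act (fst p) x, act (snd p) y) \<in> F}"
proof
  assume "(x, y) \<in> orbit_rel act"
  then obtain h where h: "act h x = y"
    unfolding orbit_rel_def by blast
  obtain V where V: "open V" "0 \<in> V" "(\<lambda>g. act g x) ` V \<inter> C \<subseteq> F `` {x}"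
    using assms(5,7) by blast
  have "open (V \<times> {b. b + h \<in> V})"
    using V(1) open_vimage[OF V(1) continuous_on_add[OF continuous_on_id continuous_on_const]]
    by (intro open_Times) (simp_all add: vimage_def)
  moreover have "(0, - h) \<in> V \<times> {b. b + h \<in> V}"
    using V(2) by simp
  then have "V \<times> {b. b + h \<in> V} \<noteq> {}"
    by blast
  moreover have "comeager (return_set act x C \<times> return_set act y C)"
    using assms(6) by (intro comeager_Times) blast+
  ultimately show "\<not> meager {p :: 'g \<times> 'g. (act (fst p) x, act (snd p) y) \<in> F}"
    by (rule not_meager_if_open_inter_comeager_subset)
      (rule translates_related_near_zero[OF assms(1,2) V(3) h])
next
  assume "\<not> meager {p :: 'g \<times> 'g. (act (fst p) x, act (snd p) y) \<in> F}"
  then obtain p :: "'g \<times> 'g" where "(act (fst p) x, act (snd p) y) \<in> F"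
    using meager_empty by force
  then show "(x, y) \<in> orbit_rel act"
    by (rule orbit_rel_if_translates_related[OF assms(1,4)])
qed

end
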